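(* Let $a$ be a real number that is algebraic over $\mathbb{Q}$, and let $\mathbb{Q}(a)^+=\{x\in\mathbb{Q}(a): x>0\}$. Then $\mathbb{Q}(a)^+$ cannot be written as $H_1\sqcup H_2$ with $H_1,H_2$ disjoint nonempty subsets, each closed under addition and multiplication. *)

theory Defs
  imports Complex_Main "HOL-Computational_Algebra.Polynomial"
begin

definition real_subfield :: "real set \<Rightarrow> bool" where
  "real_subfield S \<longleftrightarrow> 0 \<in> S \<and> 1 \<in> S \<and>
     (\<forall>x\<in>S. \<forall>y\<in>S. x + y \<in> S \<and> x - y \<in> S \<and> x * y \<in> S) \<and>
     (\<forall>x\<in>S. x \<noteq> 0 \<longrightarrow> inverse x \<in> S)"

definition rat_adjoin :: "real \<Rightarrow> real set" where
  "rat_adjoin a = \<Inter>{S. real_subfield S \<and> a \<in> S}"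

definition add_mult_closed :: "real set \<Rightarrow> bool" where
  "add_mult_closed H \<longleftrightarrow> (\<forall>x\<in>H. \<forall>y\<in>H. x + y \<in> H \<and> x * y \<in> H)"

end

theory Submission
  imports Defs "HOL-Computational_Algebra.Polynomial_Factorial" "HOL-Computational_Algebra.Field_as_Ring"
begin

text \<open>Suppose the positive elements of \<open>K = \<rat>(a)\<close> split into additively and multiplicatively
  closed sets \<open>H1 \<ni> 1\<close> and \<open>H2 \<noteq> {}\<close>. Declaring \<open>H1\<close> positive and \<open>H2\<close> negative gives a total
  order on \<open>K\<close> as a \<open>\<rat>\<close>-vector space. As \<open>K\<close> is finite-dimensional over \<open>\<rat>\<close>, this order has
  an order unit \<open>e\<close>, and \<open>L v = sup {r \<in> \<rat>. r e \<le> v}\<close> is a \<open>\<rat>\<close>-linear functional with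
  \<open>L e = 1\<close>, nonnegative on \<open>H1\<close> and nonpositive on \<open>H2\<close>. Closure under squaring makes \<open>z L z\<close>
  and \<open>L (z * z)\<close> agree in sign; testing this along \<open>z \<in> w + \<rat>\<close> yields \<open>L 1 = 0\<close> and then the
  Leibniz rule. So \<open>L\<close> is a derivation of \<open>K\<close>, and derivations vanish on \<open>\<rat>(a)\<close> because
  the minimal polynomial of \<open>a\<close> is separable; this contradicts \<open>L e = 1\<close>.\<close>

context
  fixes S :: "real set"
  assumes S: "real_subfield S"
begin

lemma real_subfield_0: "0 \<in> S"
  and real_subfield_1: "1 \<in> S"
  and real_subfield_add: "x \<in> S \<Longrightarrow> y \<in> S \<Longrightarrow> x + y \<in> S"
  and real_subfield_diff: "x \<in> S \<Longrightarrow> y \<in> S \<Longrightarrow> x - y \<in> S"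
  and real_subfield_mult: "x \<in> S \<Longrightarrow> y \<in> S \<Longrightarrow> x * y \<in> S"
  and real_subfield_inverse: "x \<in> S \<Longrightarrow> inverse x \<in> S"
  using S inverse_zero unfolding real_subfield_def by metis+

lemma real_subfield_uminus: "x \<in> S \<Longrightarrow> - x \<in> S"
  using real_subfield_diff[OF real_subfield_0] by simp

lemma real_subfield_of_int: "of_int k \<in> S"
proof (induction k rule: int_induct[of _ 0])
  case base
  show ?case using real_subfield_0 by simp
next
  case (step1 k)
  then show ?case using real_subfield_add[OF _ real_subfield_1] by simp
next
  case (step2 k)
  then show ?case using real_subfield_diff[OF _ real_subfield_1] by simp
qed

lemma real_subfield_Rats: "q \<in> \<rat> \<Longrightarrow> q \<in> S"
  by (auto elim!: Rats_cases' simp: divide_inverse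
      intro!: real_subfield_mult real_subfield_inverse real_subfield_of_int)

end

lemma real_subfield_rat_adjoin: "real_subfield (rat_adjoin a)"
  unfolding rat_adjoin_def real_subfield_def by auto

lemma rat_adjoin_generator: "a \<in> rat_adjoin a"
  unfolding rat_adjoin_def by auto

lemma rat_adjoin_least: "real_subfield S \<Longrightarrow> a \<in> S \<Longrightarrow> rat_adjoin a \<subseteq> S"
  unfolding rat_adjoin_def by auto

lemma rat_adjoin_power: "a ^ n \<in> rat_adjoin a"
  by (induction n)
    (auto intro: real_subfield_1 real_subfield_mult real_subfield_rat_adjoin rat_adjoin_generator)

section \<open>Rational polynomials and minimal polynomials\<close>

definition eval_rat_poly :: "rat poly \<Rightarrow> real \<Rightarrow> real" where
  "eval_rat_poly p x = poly (map_poly of_rat p) x"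

lemma eval_rat_poly_0 [simp]: "eval_rat_poly 0 x = 0"
  by (simp add: eval_rat_poly_def)

lemma eval_rat_poly_1 [simp]: "eval_rat_poly 1 x = 1"
  by (simp add: eval_rat_poly_def)

lemma eval_rat_poly_pCons [simp]: "eval_rat_poly (pCons c p) x = of_rat c + x * eval_rat_poly p x"
  by (simp add: eval_rat_poly_def map_poly_pCons)

lemma eval_rat_poly_const [simp]: "eval_rat_poly [:c:] x = of_rat c"
  by simp

lemma eval_rat_poly_smult [simp]: "eval_rat_poly (smult c p) x = of_rat c * eval_rat_poly p x"
  by (simp add: eval_rat_poly_def map_poly_smult of_rat_mult)

lemma eval_rat_poly_add [simp]: "eval_rat_poly (p + q) x = eval_rat_poly p x + eval_rat_poly q x"
proof -
  have "map_poly (of_rat :: rat \<Rightarrow> real) (p + q) = map_poly of_rat p + map_poly of_rat q"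
    by (rule poly_eqI) (simp add: coeff_map_poly of_rat_add)
  then show ?thesis by (simp add: eval_rat_poly_def)
qed

lemma eval_rat_poly_mult [simp]: "eval_rat_poly (p * q) x = eval_rat_poly p x * eval_rat_poly q x"
proof -
  have "map_poly (of_rat :: rat \<Rightarrow> real) (p * q) = map_poly of_rat p * map_poly of_rat q"
    by (rule poly_eqI) (simp add: coeff_map_poly coeff_mult of_rat_sum of_rat_mult)
  then show ?thesis by (simp add: eval_rat_poly_def)
qed

lemma eval_rat_poly_diff [simp]: "eval_rat_poly (p - q) x = eval_rat_poly p x - eval_rat_poly q x"
  using eval_rat_poly_add[of "p - q" q x] by simp

lemma eval_rat_poly_mod:
  assumes "eval_rat_poly f x = 0"
  shows "eval_rat_poly (p mod f) x = eval_rat_poly p x"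
  using eval_rat_poly_add[of "p div f * f" "p mod f" x] assms by simp

lemma eval_rat_poly_as_sum:
  assumes "degree p < n"
  shows "eval_rat_poly p x = (\<Sum>i<n. of_rat (coeff p i) * x ^ i)"
proof -
  have "eval_rat_poly p x = (\<Sum>i\<le>degree p. of_rat (coeff p i) * x ^ i)"
    unfolding eval_rat_poly_def poly_altdef by (simp add: coeff_map_poly degree_map_poly)
  also have "\<dots> = (\<Sum>i<n. of_rat (coeff p i) * x ^ i)"
    using assms by (intro sum.mono_neutral_left) (auto simp: coeff_eq_0)
  finally show ?thesis .
qed

lemma eval_rat_poly_in_subfield:
  assumes "real_subfield S" "x \<in> S"
  shows "eval_rat_poly p x \<in> S"
  using assms
  by (induction p) (simp_all add: real_subfield_0 real_subfield_add real_subfield_mult real_subfield_Rats)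

locale rat_minpoly =
  fixes a :: real and f :: "rat poly"
  assumes nonzero: "f \<noteq> 0"
    and root: "eval_rat_poly f a = 0"
    and minimal: "\<And>g. g \<noteq> 0 \<Longrightarrow> eval_rat_poly g a = 0 \<Longrightarrow> degree f \<le> degree g"
begin

lemma degree_pos: "0 < degree f"
proof (rule ccontr)
  assume "\<not> 0 < degree f"
  then obtain c where "f = [:c:]" by (auto elim: degree_eq_zeroE)
  with nonzero root show False by simp
qed

lemma pderiv_root_nonzero: "eval_rat_poly (pderiv f) a \<noteq> 0"
proof
  have "pderiv f \<noteq> 0" using degree_pos by (simp add: pderiv_eq_0_iff)
  moreover assume "eval_rat_poly (pderiv f) a = 0"
  ultimately have "degree f \<le> degree (pderiv f)" by (rule minimal)
  with degree_pos show False by (simp add: degree_pderiv)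
qed

text \<open>By minimality \<open>gcd p f\<close> is constant, so a Bezout identity inverts \<open>p\<close> modulo \<open>f\<close>.\<close>
lemma eval_rat_poly_inverse:
  assumes "eval_rat_poly p a \<noteq> 0"
  obtains q where "eval_rat_poly q a = inverse (eval_rat_poly p a)"
proof -
  define g where "g = gcd p f"
  obtain h where fh: "f = g * h" unfolding g_def by (metis gcd_dvd2 dvdE)
  obtain k where pk: "p = g * k" unfolding g_def by (metis gcd_dvd1 dvdE)
  have "g \<noteq> 0" "h \<noteq> 0" using fh nonzero by auto
  have "eval_rat_poly h a = 0" using root assms fh pk by simp
  then have "degree f \<le> degree h" using \<open>h \<noteq> 0\<close> by (rule minimal[rotated])
  with fh \<open>g \<noteq> 0\<close> \<open>h \<noteq> 0\<close> have "degree g = 0" by (simp add: degree_mult_eq)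
  then obtain c where c: "g = [:c:]" by (elim degree_eq_zeroE)
  with \<open>g \<noteq> 0\<close> have "c \<noteq> 0" by simp
  define u where "u = fst (bezout_coefficients p f)"
  define v where "v = snd (bezout_coefficients p f)"
  have "u * p + v * f = g" unfolding u_def v_def g_def by (rule bezout_coefficients_fst_snd)
  then have uc: "eval_rat_poly u a * eval_rat_poly p a = of_rat c"
    using root c by (metis eval_rat_poly_add eval_rat_poly_mult eval_rat_poly_const mult_zero_right add_0_right)
  with \<open>c \<noteq> 0\<close> have "eval_rat_poly u a \<noteq> 0" by auto
  have "eval_rat_poly (smult (inverse c) u) a
      = inverse (eval_rat_poly u a * eval_rat_poly p a) * eval_rat_poly u a"
    by (simp add: of_rat_inverse uc)
  also have "\<dots> = inverse (eval_rat_poly p a)"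
    using \<open>eval_rat_poly u a \<noteq> 0\<close> by (simp add: inverse_mult_distrib)
  finally show ?thesis by (rule that)
qed

lemma real_subfield_eval_range: "real_subfield (range (\<lambda>p. eval_rat_poly p a))"
  unfolding real_subfield_def
  by (safe; metis eval_rat_poly_0 eval_rat_poly_1 eval_rat_poly_add eval_rat_poly_diff
      eval_rat_poly_mult eval_rat_poly_inverse rangeI)

lemma rat_adjoin_span:
  assumes "v \<in> rat_adjoin a"
  shows "\<exists>q. (\<forall>i. q i \<in> \<rat>) \<and> v = (\<Sum>i<degree f. q i * a ^ i)"
proof -
  have "a = eval_rat_poly [:0, 1:] a" by simp
  then have "rat_adjoin a \<subseteq> range (\<lambda>p. eval_rat_poly p a)"
    by (intro rat_adjoin_least real_subfield_eval_range) blast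
  with assms obtain p where "v = eval_rat_poly p a" by blast
  also have "\<dots> = eval_rat_poly (p mod f) a" by (simp add: eval_rat_poly_mod root)
  also have "\<dots> = (\<Sum>i<degree f. of_rat (coeff (p mod f) i) * a ^ i)"
    using degree_mod_less[OF nonzero, of p] degree_pos by (intro eval_rat_poly_as_sum) auto
  finally show ?thesis by (intro exI[of _ "\<lambda>i. of_rat (coeff (p mod f) i)"]) simp
qed

end

lemma rat_minpoly_exists:
  assumes "algebraic a"
  obtains f where "rat_minpoly a f"
proof -
  from assms obtain P :: "real poly" where P: "\<forall>i. coeff P i \<in> \<rat>" "P \<noteq> 0" "poly P a = 0"
    by (auto simp: algebraic_altdef)
  then obtain p where p: "P = map_poly of_rat p" by (metis ratpolyE)
  with P have "p \<noteq> 0 \<and> eval_rat_poly p a = 0" by (auto simp: eval_rat_poly_def)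
  then have "\<exists>f. (f \<noteq> 0 \<and> eval_rat_poly f a = 0) \<and>
      (\<forall>g. g \<noteq> 0 \<and> eval_rat_poly g a = 0 \<longrightarrow> degree f \<le> degree g)"
    by (rule ex_has_least_nat)
  then show ?thesis by (auto intro: that rat_minpoly.intro)
qed

section \<open>Derivations vanish on algebraic extensions\<close>

context
  fixes K :: "real set" and D :: "real \<Rightarrow> real"
  assumes K: "real_subfield K"
    and D_add: "\<And>v w. v \<in> K \<Longrightarrow> w \<in> K \<Longrightarrow> D (v + w) = D v + D w"
    and D_mult: "\<And>v w. v \<in> K \<Longrightarrow> w \<in> K \<Longrightarrow> D (v * w) = v * D w + w * D v"
begin

lemma real_subfield_derivation_kernel: "real_subfield {v \<in> K. D v = 0}"
proof -
  have D0: "D 0 = 0" using D_add[of 0 0] real_subfield_0[OF K] by simp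
  have D1: "D 1 = 0" using D_mult[of 1 1] real_subfield_1[OF K] by simp
  have D_diff: "D (v - w) = D v - D w" if "v \<in> K" "w \<in> K" for v w
    using D_add[of "v - w" w] real_subfield_diff[OF K that] that by simp
  have D_inverse: "D (inverse v) = 0" if "v \<in> K" "v \<noteq> 0" "D v = 0" for v
    using D_mult[of v "inverse v"] real_subfield_inverse[OF K] that D1 by simp
  show ?thesis
    unfolding real_subfield_def
    by (simp add: D0 D1 D_add D_diff D_mult D_inverse real_subfield_0[OF K] real_subfield_1[OF K]
        real_subfield_add[OF K] real_subfield_diff[OF K] real_subfield_mult[OF K]
        real_subfield_inverse[OF K])
qed

lemma derivation_eval_rat_poly:
  assumes "x \<in> K"
  shows "D (eval_rat_poly p x) = eval_rat_poly (pderiv p) x * D x"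
proof (induction p)
  case 0
  show ?case using real_subfield_derivation_kernel by (simp add: real_subfield_def)
next
  case (pCons c p)
  have "of_rat c \<in> {v \<in> K. D v = 0}"
    by (rule real_subfield_Rats[OF real_subfield_derivation_kernel]) simp
  moreover have "eval_rat_poly p x \<in> K" using K assms by (rule eval_rat_poly_in_subfield)
  ultimately show ?case
    using assms pCons.IH
    by (simp add: pderiv_pCons D_add D_mult real_subfield_mult[OF K] algebra_simps)
qed

end

lemma derivation_rat_adjoin_eq_0:
  assumes "algebraic a"
    and D_add: "\<And>v w. v \<in> rat_adjoin a \<Longrightarrow> w \<in> rat_adjoin a \<Longrightarrow> D (v + w) = D v + D w"
    and D_mult: "\<And>v w. v \<in> rat_adjoin a \<Longrightarrow> w \<in> rat_adjoin a \<Longrightarrow> D (v * w) = v * D w + w * D v"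
    and "v \<in> rat_adjoin a"
  shows "D v = 0"
proof -
  note K = real_subfield_rat_adjoin
  obtain f where "rat_minpoly a f" using assms(1) by (rule rat_minpoly_exists)
  have "eval_rat_poly (pderiv f) a * D a = D (eval_rat_poly f a)"
    using derivation_eval_rat_poly[OF K D_add D_mult rat_adjoin_generator] by simp
  also have "\<dots> = 0"
    using \<open>rat_minpoly a f\<close> real_subfield_derivation_kernel[OF K D_add D_mult]
    by (simp add: rat_minpoly.root real_subfield_def)
  finally have "D a = 0" using rat_minpoly.pderiv_root_nonzero[OF \<open>rat_minpoly a f\<close>] by simp
  then have "rat_adjoin a \<subseteq> {v \<in> rat_adjoin a. D v = 0}"
    using rat_adjoin_generator
    by (intro rat_adjoin_least real_subfield_derivation_kernel[OF K D_add D_mult]) auto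
  with assms(4) show ?thesis by blast
qed

section \<open>The ordering induced by a split of the positive cone\<close>

lemma Rats_pos_nat_fraction:
  fixes q :: real
  assumes "q \<in> \<rat>" "0 < q"
  obtains m k :: nat where "0 < m" "0 < k" "q = of_nat m / of_nat k"
proof -
  obtain i j :: int where "0 < j" "q = of_int i / of_int j"
    using assms(1) by (elim Rats_cases') blast
  moreover from this assms(2) have "0 < i"
    by (auto simp: zero_less_divide_iff)
  ultimately show ?thesis by (intro that[of "nat i" "nat j"]) simp_all
qed

locale positive_split =
  fixes K H1 H2 :: "real set"
  assumes subfield: "real_subfield K"
    and cover: "H1 \<union> H2 = {x \<in> K. x > 0}"
    and disjoint: "H1 \<inter> H2 = {}"
    and closed1: "add_mult_closed H1"
    and closed2: "add_mult_closed H2"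
begin

lemmas K_add = real_subfield_add[OF subfield]
  and K_diff = real_subfield_diff[OF subfield]
  and K_mult = real_subfield_mult[OF subfield]
  and K_uminus = real_subfield_uminus[OF subfield]
  and K_Rats = real_subfield_Rats[OF subfield]

lemma H1_in_K: "x \<in> H1 \<Longrightarrow> x \<in> K"
  and H1_pos: "x \<in> H1 \<Longrightarrow> 0 < x"
  and H1_or_H2: "x \<in> K \<Longrightarrow> 0 < x \<Longrightarrow> x \<in> H1 \<or> x \<in> H2"
  and H1_not_H2: "x \<in> H1 \<Longrightarrow> x \<notin> H2"
  using cover disjoint by blast+

lemma H1_add: "x \<in> H1 \<Longrightarrow> y \<in> H1 \<Longrightarrow> x + y \<in> H1"
  and H1_mult: "x \<in> H1 \<Longrightarrow> y \<in> H1 \<Longrightarrow> x * y \<in> H1"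
  using closed1 unfolding add_mult_closed_def by blast+

lemma H1_of_nat_mult: "x \<in> H1 \<Longrightarrow> 0 < n \<Longrightarrow> of_nat n * x \<in> H1"
proof (induction n)
  case (Suc n)
  then show ?case using H1_add[of x "of_nat n * x"] by (cases "n = 0") (auto simp: distrib_right)
qed simp

end

sublocale positive_split \<subseteq> swap: positive_split K H2 H1
  using subfield cover disjoint closed1 closed2 by unfold_locales auto

context positive_split
begin

lemma H1_rat_mult:
  assumes x: "x \<in> H1" and q: "q \<in> \<rat>" "0 < q"
  shows "q * x \<in> H1"
proof (rule ccontr)
  obtain m k :: nat where mk: "0 < m" "0 < k" "q = of_nat m / of_nat k"
    using q by (rule Rats_pos_nat_fraction)
  assume "q * x \<notin> H1"
  then have "q * x \<in> H2"
    using H1_or_H2[of "q * x"] x q H1_in_K[OF x] H1_pos[OF x]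
      K_mult[OF K_Rats[OF q(1)]] by auto
  then have "of_nat k * (q * x) \<in> H2" using \<open>0 < k\<close> by (rule swap.H1_of_nat_mult)
  moreover have "of_nat k * (q * x) = of_nat m * x" using mk by simp
  ultimately show False using H1_of_nat_mult[OF x \<open>0 < m\<close>] H1_not_H2 by simp
qed

lemma H1_diff_H2:
  assumes "u \<in> H1" "y \<in> H2" "y < u"
  shows "u - y \<in> H1"
proof (rule ccontr)
  assume "u - y \<notin> H1"
  then have "u - y \<in> H2"
    using assms H1_or_H2[of "u - y"] K_diff[OF H1_in_K swap.H1_in_K] by auto
  then have "(u - y) + y \<in> H2" using assms(2) by (rule swap.H1_add)
  with assms(1) H1_not_H2 show False by simp
qed

end

(* Reopened so that the swapped instances of the two lemmas above become available. *)
context positive_split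
begin

definition positive :: "real \<Rightarrow> bool" where
  "positive v \<longleftrightarrow> v \<in> H1 \<or> - v \<in> H2"

definition nonneg :: "real \<Rightarrow> bool" where
  "nonneg v \<longleftrightarrow> v = 0 \<or> positive v"

lemma positive_in_K: "positive v \<Longrightarrow> v \<in> K"
  unfolding positive_def by (metis H1_in_K swap.H1_in_K K_uminus minus_minus)

lemma H1_positive: "x \<in> H1 \<Longrightarrow> positive x"
  and H2_positive_uminus: "y \<in> H2 \<Longrightarrow> positive (- y)"
  unfolding positive_def by simp_all

lemma positive_H1_diff_H2:
  assumes "u \<in> H1" "y \<in> H2"
  shows "positive (u - y)"
proof -
  have "u \<noteq> y" using assms H1_not_H2 by blast
  then consider "y < u" | "u < y" by linarith
  then show ?thesis
  proof cases
    case 1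
    then show ?thesis using H1_diff_H2 assms by (simp add: positive_def)
  next
    case 2
    then show ?thesis using swap.H1_diff_H2 assms by (simp add: positive_def)
  qed
qed

lemma positive_add:
  assumes "positive v" "positive w"
  shows "positive (v + w)"
  using assms H1_add[of v w] swap.H1_add[of "- v" "- w"]
    positive_H1_diff_H2[of v "- w"] positive_H1_diff_H2[of w "- v"]
  unfolding positive_def by (auto simp: add.commute)

lemma positive_or_positive_uminus:
  assumes "v \<in> K" "v \<noteq> 0"
  shows "positive v \<or> positive (- v)"
proof (cases "0 < v")
  case True
  then show ?thesis using assms H1_or_H2[of v] unfolding positive_def by auto
next
  case False
  with assms have "- v \<in> K" "0 < - v" using K_uminus by auto
  then show ?thesis using H1_or_H2[of "- v"] unfolding positive_def by auto
qed

lemma positive_uminus_not_positive: "positive v \<Longrightarrow> \<not> positive (- v)"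
  using H1_pos[of v] H1_pos[of "- v"] swap.H1_pos[of v] swap.H1_pos[of "- v"]
    H1_not_H2[of v] H1_not_H2[of "- v"]
  unfolding positive_def by auto

lemma positive_rat_mult:
  assumes "q \<in> \<rat>" "0 < q" "positive v"
  shows "positive (q * v)"
  using assms H1_rat_mult[of v q] swap.H1_rat_mult[of "- v" q] unfolding positive_def by auto

lemma not_positive_0: "\<not> positive 0"
  using positive_uminus_not_positive[of 0] by auto

lemma nonneg_0: "nonneg 0"
  by (simp add: nonneg_def)

lemma nonneg_add: "nonneg v \<Longrightarrow> nonneg w \<Longrightarrow> nonneg (v + w)"
  unfolding nonneg_def using positive_add by auto

lemma positive_add_nonneg: "positive v \<Longrightarrow> nonneg w \<Longrightarrow> positive (v + w)"
  unfolding nonneg_def using positive_add by auto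

lemma nonneg_rat_mult: "q \<in> \<rat> \<Longrightarrow> 0 \<le> q \<Longrightarrow> nonneg v \<Longrightarrow> nonneg (q * v)"
  unfolding nonneg_def using positive_rat_mult by (cases "q = 0") auto

lemma nonneg_sum: "(\<And>i. i \<in> I \<Longrightarrow> nonneg (g i)) \<Longrightarrow> nonneg (sum g I)"
  by (induction I rule: infinite_finite_induct) (simp_all add: nonneg_0 nonneg_add)

lemma nonneg_or_positive_uminus: "v \<in> K \<Longrightarrow> nonneg v \<or> positive (- v)"
  unfolding nonneg_def using positive_or_positive_uminus by auto

lemma positive_uminus_not_nonneg: "positive v \<Longrightarrow> \<not> nonneg (- v)"
  unfolding nonneg_def using positive_uminus_not_positive not_positive_0 by auto

lemma nonneg_unit_bound:
  fixes b q s :: "nat \<Rightarrow> real"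
  assumes "1 \<in> H1" and s: "\<And>i. s i = 1 \<or> s i = - 1" and sb: "\<And>i. i < n \<Longrightarrow> nonneg (s i * b i)"
    and q: "\<And>i. q i \<in> \<rat>"
  shows "nonneg ((1 + (\<Sum>i<n. \<bar>q i\<bar>)) * (1 + (\<Sum>i<n. s i * b i)) - (\<Sum>i<n. q i * b i))"
proof -
  define N where "N = 1 + (\<Sum>i<n. \<bar>q i\<bar>)"
  have N_Rats: "N \<in> \<rat>" unfolding N_def using q by (intro Rats_add Rats_sum) auto
  have N_ge: "\<bar>q i\<bar> \<le> N" if "i < n" for i
  proof -
    have "\<bar>q i\<bar> \<le> (\<Sum>i<n. \<bar>q i\<bar>)" using that by (intro member_le_sum) auto
    then show ?thesis unfolding N_def by simp
  qed
  have summand: "(N - s i * q i) * (s i * b i) = N * (s i * b i) - q i * b i" for i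
    using s[of i] by (auto simp: algebra_simps)
  have "N * (1 + (\<Sum>i<n. s i * b i)) - (\<Sum>i<n. q i * b i)
      = N * 1 + (\<Sum>i<n. (N - s i * q i) * (s i * b i))"
    unfolding summand by (simp add: sum_subtractf sum_distrib_left algebra_simps)
  moreover have "nonneg (N * 1)"
    using N_Rats H1_positive[OF assms(1)] unfolding N_def
    by (intro nonneg_rat_mult) (auto simp: nonneg_def intro: sum_nonneg)
  moreover have "nonneg ((N - s i * q i) * (s i * b i))" if "i < n" for i
  proof (rule nonneg_rat_mult)
    show "N - s i * q i \<in> \<rat>" using N_Rats q s[of i] by auto
    show "0 \<le> N - s i * q i" using N_ge[OF that] s[of i] by auto
  qed (rule sb[OF that])
  ultimately show ?thesis unfolding N_def[symmetric] by (auto intro!: nonneg_add nonneg_sum)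
qed

text \<open>The order unit is \<open>1 + (\<Sum>i<n. \<bar>b i\<bar>)\<close>, absolute values taken with respect to \<open>nonneg\<close>.\<close>
lemma order_unit_of_finite_span:
  fixes b :: "nat \<Rightarrow> real"
  assumes "1 \<in> H1" and b: "\<And>i. i < n \<Longrightarrow> b i \<in> K"
    and span: "\<And>v. v \<in> K \<Longrightarrow> \<exists>q. (\<forall>i. q i \<in> \<rat>) \<and> v = (\<Sum>i<n. q i * b i)"
  shows "\<exists>e. positive e \<and> (\<forall>v\<in>K. \<exists>N\<in>\<rat>. nonneg (N * e - v))"
proof -
  define s where "s i = (if nonneg (b i) then 1 else - 1 :: real)" for i
  have s: "s i = 1 \<or> s i = - 1" for i by (simp add: s_def)
  have sb: "nonneg (s i * b i)" if "i < n" for i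
    using nonneg_or_positive_uminus[OF b[OF that]] by (auto simp: s_def nonneg_def)
  define e where "e = 1 + (\<Sum>i<n. s i * b i)"
  have "positive e"
    unfolding e_def using H1_positive[OF assms(1)] sb
    by (intro positive_add_nonneg nonneg_sum) auto
  moreover have "\<exists>N\<in>\<rat>. nonneg (N * e - v)" if "v \<in> K" for v
  proof -
    obtain q where q: "\<And>i. q i \<in> \<rat>" and v: "v = (\<Sum>i<n. q i * b i)"
      using span[OF \<open>v \<in> K\<close>] by blast
    have "1 + (\<Sum>i<n. \<bar>q i\<bar>) \<in> \<rat>" using q by (intro Rats_add Rats_sum) auto
    moreover have "nonneg ((1 + (\<Sum>i<n. \<bar>q i\<bar>)) * e - v)"
      unfolding e_def v using assms(1) s sb q by (rule nonneg_unit_bound)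
    ultimately show ?thesis by blast
  qed
  ultimately show ?thesis by blast
qed

end

section \<open>The functional attached to an order unit\<close>

locale split_order_unit = positive_split +
  fixes e :: real
  assumes unit_positive: "positive e"
    and unit_bound: "v \<in> K \<Longrightarrow> \<exists>N\<in>\<rat>. nonneg (N * e - v)"
begin

definition L :: "real \<Rightarrow> real" where
  "L v = Sup {r \<in> \<rat>. nonneg (v - r * e)}"

lemma unit_in_K: "e \<in> K"
  using unit_positive by (rule positive_in_K)

lemma rat_unit_in_K: "r \<in> \<rat> \<Longrightarrow> r * e \<in> K"
  using K_mult K_Rats unit_in_K by blast

lemma positive_rat_unit: "r \<in> \<rat> \<Longrightarrow> 0 < r \<Longrightarrow> positive (r * e)"
  using positive_rat_mult unit_positive by blast

lemma L_set_bounded: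
  assumes "v \<in> K"
  shows "{r \<in> \<rat>. nonneg (v - r * e)} \<noteq> {}" "bdd_above {r \<in> \<rat>. nonneg (v - r * e)}"
proof -
  obtain M where "M \<in> \<rat>" "nonneg (M * e - - v)" using unit_bound K_uminus assms by blast
  then have "- M \<in> {r \<in> \<rat>. nonneg (v - r * e)}" by (simp add: add.commute)
  then show "{r \<in> \<rat>. nonneg (v - r * e)} \<noteq> {}" by blast
  obtain N where N: "N \<in> \<rat>" "nonneg (N * e - v)" using unit_bound assms by blast
  have "r \<le> N" if r: "r \<in> \<rat>" "nonneg (v - r * e)" for r
  proof (rule ccontr)
    assume "\<not> r \<le> N"
    then have "positive ((r - N) * e)" using r N by (intro positive_rat_unit) auto
    moreover have "nonneg (- ((r - N) * e))"
      using nonneg_add[OF r(2) N(2)] by (simp add: algebra_simps)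
    ultimately show False using positive_uminus_not_nonneg by blast
  qed
  then show "bdd_above {r \<in> \<rat>. nonneg (v - r * e)}" by (intro bdd_aboveI[of _ N]) auto
qed

lemma positive_below_L:
  assumes "v \<in> K" "r \<in> \<rat>" "r < L v"
  shows "positive (v - r * e)"
proof -
  obtain s where s: "s \<in> \<rat>" "nonneg (v - s * e)" "r < s"
    using assms(3) less_cSup_iff[OF L_set_bounded[OF assms(1)]] unfolding L_def by auto
  have "positive ((s - r) * e + (v - s * e))"
    using s assms(2) by (intro positive_add_nonneg positive_rat_unit) auto
  then show ?thesis by (simp add: algebra_simps)
qed

lemma positive_above_L:
  assumes "v \<in> K" "r \<in> \<rat>" "L v < r"
  shows "positive (r * e - v)"
proof -
  have "\<not> nonneg (v - r * e)"
    using assms cSup_upper[OF _ L_set_bounded(2)[OF assms(1)], of r] unfolding L_def by auto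
  then show ?thesis
    using nonneg_or_positive_uminus[of "v - r * e"] K_diff assms(1) rat_unit_in_K[OF assms(2)]
    by auto
qed

lemma L_eqI:
  assumes "v \<in> K"
    and "\<And>r. r \<in> \<rat> \<Longrightarrow> r < x \<Longrightarrow> nonneg (v - r * e)"
    and "\<And>r. r \<in> \<rat> \<Longrightarrow> x < r \<Longrightarrow> nonneg (r * e - v)"
  shows "L v = x"
proof (rule ccontr)
  assume "L v \<noteq> x"
  then consider "x < L v" | "L v < x" by linarith
  then show False
  proof cases
    case 1
    then obtain r where "r \<in> \<rat>" "x < r" "r < L v" using Rats_dense_in_real by blast
    then have "positive (v - r * e)" "nonneg (- (v - r * e))"
      using positive_below_L assms by auto
    then show False using positive_uminus_not_nonneg by blast
  next
    case 2
    then obtain r where "r \<in> \<rat>" "L v < r" "r < x" using Rats_dense_in_real by blast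
    then have "positive (r * e - v)" "nonneg (- (r * e - v))"
      using positive_above_L assms by auto
    then show False using positive_uminus_not_nonneg by blast
  qed
qed

lemma L_add:
  assumes "v \<in> K" "w \<in> K"
  shows "L (v + w) = L v + L w"
proof (rule L_eqI)
  show "v + w \<in> K" using assms by (rule K_add)
next
  fix r assume r: "r \<in> \<rat>" "r < L v + L w"
  then obtain s where s: "s \<in> \<rat>" "r - L w < s" "s < L v"
    using Rats_dense_in_real[of "r - L w" "L v"] by auto
  have "positive (v - s * e)" using assms(1) s(1,3) by (rule positive_below_L)
  moreover have "positive (w - (r - s) * e)" using assms(2) r s by (intro positive_below_L) auto
  ultimately have "positive ((v - s * e) + (w - (r - s) * e))" by (rule positive_add)
  moreover have "(v - s * e) + (w - (r - s) * e) = v + w - r * e" by (simp add: algebra_simps)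
  ultimately show "nonneg (v + w - r * e)" by (simp add: nonneg_def)
next
  fix r assume r: "r \<in> \<rat>" "L v + L w < r"
  then obtain s where s: "s \<in> \<rat>" "L v < s" "s < r - L w"
    using Rats_dense_in_real[of "L v" "r - L w"] by auto
  have "positive (s * e - v)" using assms(1) s(1,2) by (rule positive_above_L)
  moreover have "positive ((r - s) * e - w)" using assms(2) r s by (intro positive_above_L) auto
  ultimately have "positive ((s * e - v) + ((r - s) * e - w))" by (rule positive_add)
  moreover have "(s * e - v) + ((r - s) * e - w) = r * e - (v + w)" by (simp add: algebra_simps)
  ultimately show "nonneg (r * e - (v + w))" by (simp add: nonneg_def)
qed

lemma L_0: "L 0 = 0"
  using L_add[of 0 0] K_Rats[of 0] by simp

lemma L_uminus: "v \<in> K \<Longrightarrow> L (- v) = - L v"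
  using L_add[of v "- v"] K_uminus[of v] L_0 by simp

lemma L_diff: "v \<in> K \<Longrightarrow> w \<in> K \<Longrightarrow> L (v - w) = L v - L w"
  using L_add[of v "- w"] L_uminus[of w] K_uminus by simp

lemma L_pos_rat_mult:
  assumes "v \<in> K" "q \<in> \<rat>" "0 < q"
  shows "L (q * v) = q * L v"
proof (rule L_eqI)
  show "q * v \<in> K" using K_mult[OF K_Rats[OF assms(2)] assms(1)] .
next
  fix r assume "r \<in> \<rat>" "r < q * L v"
  then have "positive (v - r / q * e)" using assms by (intro positive_below_L) (auto simp: field_simps)
  then have "positive (q * (v - r / q * e))" using assms by (intro positive_rat_mult)
  then show "nonneg (q * v - r * e)" using \<open>0 < q\<close> by (simp add: nonneg_def algebra_simps)
next
  fix r assume "r \<in> \<rat>" "q * L v < r"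
  then have "positive (r / q * e - v)" using assms by (intro positive_above_L) (auto simp: field_simps)
  then have "positive (q * (r / q * e - v))" using assms by (intro positive_rat_mult)
  then show "nonneg (r * e - q * v)" using \<open>0 < q\<close> by (simp add: nonneg_def algebra_simps)
qed

lemma L_rat_mult:
  assumes "v \<in> K" "q \<in> \<rat>"
  shows "L (q * v) = q * L v"
proof -
  consider "0 < q" | "q = 0" | "0 < - q" by linarith
  then show ?thesis
  proof cases
    case 3
    then have "L (- q * v) = - q * L v" using assms by (intro L_pos_rat_mult) auto
    moreover have "- q * v \<in> K" using K_uminus[OF K_mult[OF K_Rats[OF assms(2)] assms(1)]] by simp
    ultimately show ?thesis using L_uminus[of "- q * v"] by simp
  qed (simp_all add: assms L_pos_rat_mult L_0)
qed

lemma L_unit: "L e = 1"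
proof (rule L_eqI)
  fix r :: real assume "r \<in> \<rat>" "r < 1"
  then have "positive ((1 - r) * e)" by (intro positive_rat_unit) auto
  then show "nonneg (e - r * e)" by (simp add: nonneg_def algebra_simps)
next
  fix r :: real assume "r \<in> \<rat>" "1 < r"
  then have "positive ((r - 1) * e)" by (intro positive_rat_unit) auto
  then show "nonneg (r * e - e)" by (simp add: nonneg_def algebra_simps)
qed (rule unit_in_K)

lemma L_nonneg:
  assumes "positive v"
  shows "0 \<le> L v"
proof (rule ccontr)
  assume "\<not> 0 \<le> L v"
  then have "positive (0 * e - v)" using positive_above_L[of v 0] positive_in_K[OF assms] by simp
  with assms positive_uminus_not_positive show False by simp
qed

lemma L_H1_nonneg: "x \<in> H1 \<Longrightarrow> 0 \<le> L x"
  using L_nonneg H1_positive by blast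

lemma L_H2_nonpos: "y \<in> H2 \<Longrightarrow> L y \<le> 0"
  using L_nonneg[OF H2_positive_uminus, of y] L_uminus[OF swap.H1_in_K, of y] by simp

end

section \<open>The functional is a derivation\<close>

lemma Rats_shift_dense:
  fixes w l h :: real
  assumes "l < h"
  obtains r where "r \<in> \<rat>" "l < r + w" "r + w < h"
  using Rats_dense_in_real[of "l - w" "h - w"] assms by auto

lemma Rats_shift_quadratic_neg:
  fixes s w :: real
  assumes "s \<noteq> 0"
  obtains r where "r \<in> \<rat>" "(r + w) * (r + w - s) < 0"
proof -
  have "min 0 s < max 0 s" using assms by (simp add: min_def max_def)
  then obtain r where r: "r \<in> \<rat>" "min 0 s < r + w" "r + w < max 0 s"
    by (rule Rats_shift_dense)
  have "(r + w) * (r + w - s) < 0"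
  proof (cases "0 < s")
    case True
    then have "0 < r + w" "r + w - s < 0" using r by (simp_all add: min_def max_def)
    then show ?thesis by (rule mult_pos_neg)
  next
    case False
    then have "r + w < 0" "0 < r + w - s" using r assms by (simp_all add: min_def max_def)
    then show ?thesis by (rule mult_neg_pos)
  qed
  with r(1) show ?thesis by (rule that)
qed

lemma Rats_shift_cubic_neg:
  fixes c u d w :: real
  assumes "0 < c" "0 < u"
  obtains r where "r \<in> \<rat>" "(r + w) * (c * (r + w - u)) * (c * (r + w - u) * (r + w - u) + d) < 0"
proof (cases "d < 0")
  case True
  define \<delta> where "\<delta> = - d / c"
  have c\<delta>: "c * \<delta> = - d" using \<open>0 < c\<close> by (simp add: \<delta>_def)
  with True have "0 < c * \<delta>" by simp
  then have "0 < \<delta>" using \<open>0 < c\<close> by (rule zero_less_mult_pos)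
  then have "u < u + min 1 \<delta>" by simp
  then obtain r where r: "r \<in> \<rat>" "u < r + w" "r + w < u + min 1 \<delta>"
    by (rule Rats_shift_dense)
  define t where "t = r + w - u"
  have "0 < t" "t < 1" "t < \<delta>" using r by (simp_all add: t_def)
  then have "c * t * t < c * t * 1" "c * t < c * \<delta>" using \<open>0 < c\<close> by simp_all
  with c\<delta> have "c * t * t + d < 0" by simp
  moreover have "0 < (r + w) * (c * t)"
    using \<open>0 < u\<close> r(2) \<open>0 < c\<close> \<open>0 < t\<close> by simp
  ultimately have "(r + w) * (c * t) * (c * t * t + d) < 0" by (simp add: mult_pos_neg)
  with r(1) show ?thesis unfolding t_def by (rule that)
next
  case False
  obtain r where r: "r \<in> \<rat>" "0 < r + w" "r + w < u"
    using Rats_shift_dense[OF \<open>0 < u\<close>] by blast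
  then have "c * (r + w - u) < 0" using \<open>0 < c\<close> by (simp add: mult_pos_neg)
  with r(3) have "0 < c * (r + w - u) * (r + w - u)" by (simp add: mult_neg_neg)
  with False have "0 < c * (r + w - u) * (r + w - u) + d" by simp
  moreover have "(r + w) * (c * (r + w - u)) < 0"
    using r(2) \<open>c * (r + w - u) < 0\<close> by (rule mult_pos_neg)
  ultimately have "(r + w) * (c * (r + w - u)) * (c * (r + w - u) * (r + w - u) + d) < 0"
    by (simp add: mult_neg_pos)
  with r(1) show ?thesis by (rule that)
qed

context split_order_unit
begin

lemma L_rat: "q \<in> \<rat> \<Longrightarrow> L q = q * L 1"
  using L_rat_mult[OF K_Rats[OF Rats_1], of q] by simp

lemma L_shift:
  assumes "r \<in> \<rat>" "w \<in> K"
  shows "L (r + w) = r * L 1 + L w"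
  using L_add[OF K_Rats[OF assms(1)] assms(2)] L_rat[OF assms(1)] by simp

lemma L_shift_square:
  assumes "r \<in> \<rat>" "w \<in> K"
  shows "L ((r + w) * (r + w)) = r * r * L 1 + 2 * r * L w + L (w * w)"
proof -
  have Rats: "r * r \<in> \<rat>" "2 * r \<in> \<rat>" using assms(1) by simp_all
  have K: "r * r \<in> K" "2 * r * w \<in> K" "w * w \<in> K"
    using K_Rats[OF Rats(1)] K_mult[OF K_Rats[OF Rats(2)] assms(2)] K_mult[OF assms(2,2)] by simp_all
  have "(r + w) * (r + w) = r * r + (2 * r * w + w * w)" by algebra
  then show ?thesis
    using L_add[OF K(1) K_add[OF K(2,3)]] L_add[OF K(2,3)] L_rat[OF Rats(1)]
      L_rat_mult[OF assms(2) Rats(2)] by simp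
qed

lemma L_square_sign:
  assumes "z \<in> K"
  shows "0 \<le> z * L z * L (z * z)"
proof -
  have H: "0 \<le> L y * L (y * y)" if "y \<in> H1 \<union> H2" for y
    using that L_H1_nonneg[of y] L_H1_nonneg[OF H1_mult[of y y]]
      L_H2_nonpos[of y] L_H2_nonpos[OF swap.H1_mult[of y y]]
    by (auto intro: mult_nonneg_nonneg mult_nonpos_nonpos)
  consider "z = 0" | "0 < z" | "z < 0" by linarith
  then show ?thesis
  proof cases
    case 2
    then have "0 \<le> L z * L (z * z)" using H H1_or_H2[OF assms] by blast
    with 2 show ?thesis by (simp add: mult.assoc)
  next
    case 3
    then have "0 \<le> L (- z) * L (- z * - z)" using H[of "- z"] H1_or_H2[OF K_uminus[OF assms]] by simp
    moreover have "z * L z * L (z * z) = - z * (L (- z) * L (- z * - z))"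
      using L_uminus[OF assms] by simp
    ultimately show ?thesis using 3 mult_nonpos_nonneg[of z "L (- z) * L (z * z)"] by simp
  qed simp
qed

text \<open>For \<open>z \<in> w + \<rat>\<close>, \<open>L z\<close> is affine and \<open>L (z * z)\<close> quadratic in \<open>z\<close>; near the
  root \<open>u > 0\<close> of \<open>L z\<close> their signs would contradict \<open>L_square_sign\<close>.\<close>
lemma L_one_le:
  assumes "0 < L 1" "w \<in> K"
  shows "L 1 * w \<le> L w"
proof (rule ccontr)
  define c where "c = L 1"
  define x where "x = L w"
  define v where "v = x / c"
  define u where "u = w - v"
  define d where "d = L (w * w) - x * v"
  have "0 < c" using assms(1) by (simp add: c_def)
  then have cv: "c * v = x" by (simp add: v_def)
  assume "\<not> L 1 * w \<le> L w"
  then have "0 < c * u" using cv by (simp add: c_def x_def u_def right_diff_distrib)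
  with \<open>0 < c\<close> have "0 < u" by (simp add: zero_less_mult_iff)
  have sign: "0 \<le> z * (c * (z - u)) * (c * (z - u) * (z - u) + d)"
    if "r \<in> \<rat>" "z = r + w" for r z
  proof -
    have "z \<in> K" using that K_add[OF K_Rats assms(2)] by simp
    moreover have "L z = c * (z - u)"
    proof -
      have "L z = r * c + x" using L_shift[OF that(1) assms(2)] by (simp add: that(2) c_def x_def)
      also have "\<dots> = c * (z - u)" unfolding that(2) u_def cv[symmetric] by (simp add: algebra_simps)
      finally show ?thesis .
    qed
    moreover have "L (z * z) = c * (z - u) * (z - u) + d"
    proof -
      have "L (z * z) = r * r * c + 2 * r * x + L (w * w)"
        using L_shift_square[OF that(1) assms(2)] by (simp add: that(2) c_def x_def)
      also have "\<dots> = c * (z - u) * (z - u) + d"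
        unfolding that(2) u_def d_def cv[symmetric] by (simp add: algebra_simps)
      finally show ?thesis .
    qed
    ultimately show ?thesis using L_square_sign[of z] by simp
  qed
  obtain r where "r \<in> \<rat>" "(r + w) * (c * (r + w - u)) * (c * (r + w - u) * (r + w - u) + d) < 0"
    using \<open>0 < c\<close> \<open>0 < u\<close> by (rule Rats_shift_cubic_neg)
  with sign[OF \<open>r \<in> \<rat>\<close> refl] show False by linarith
qed

lemma L_one_eq_0:
  assumes "1 \<in> H1" "H2 \<noteq> {}"
  shows "L 1 = 0"
proof (rule ccontr)
  obtain y where y: "y \<in> H2" using assms(2) by blast
  assume "L 1 \<noteq> 0"
  with L_H1_nonneg[OF assms(1)] have "0 < L 1" by simp
  then have "L 1 * y \<le> L y" using L_one_le swap.H1_in_K[OF y] by blast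
  moreover have "0 < L 1 * y" using \<open>0 < L 1\<close> swap.H1_pos[OF y] by simp
  ultimately show False using L_H2_nonpos[OF y] by simp
qed

lemma L_square_of_L_nonzero:
  assumes "L 1 = 0" "w \<in> K" "L w \<noteq> 0"
  shows "L (w * w) = 2 * w * L w"
proof (rule ccontr)
  define x where "x = L w"
  define m where "m = L (w * w)"
  define v where "v = m / (2 * x)"
  define s where "s = w - v"
  have "x \<noteq> 0" using assms(3) by (simp add: x_def)
  then have xv: "2 * x * v = m" by (simp add: v_def)
  assume "L (w * w) \<noteq> 2 * w * L w"
  then have "m \<noteq> 2 * w * x" by (simp add: x_def m_def)
  with xv have "s \<noteq> 0" by (auto simp: s_def algebra_simps)
  have sign: "0 \<le> 2 * x * x * (z * (z - s))" if "r \<in> \<rat>" "z = r + w" for r z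
  proof -
    have "z \<in> K" using that K_add[OF K_Rats assms(2)] by simp
    moreover have "L z = x" using L_shift[OF that(1) assms(2)] assms(1) by (simp add: that(2) x_def)
    moreover have "L (z * z) = 2 * x * (z - s)"
    proof -
      have "L (z * z) = 2 * r * x + m"
        using L_shift_square[OF that(1) assms(2)] assms(1) by (simp add: that(2) x_def m_def)
      also have "\<dots> = 2 * x * (z - s)" unfolding that(2) s_def xv[symmetric] by (simp add: algebra_simps)
      finally show ?thesis .
    qed
    ultimately have "0 \<le> z * x * (2 * x * (z - s))" using L_square_sign[of z] by simp
    also have "z * x * (2 * x * (z - s)) = 2 * x * x * (z * (z - s))" by algebra
    finally show ?thesis .
  qed
  obtain r where r: "r \<in> \<rat>" "(r + w) * (r + w - s) < 0"
    using \<open>s \<noteq> 0\<close> by (rule Rats_shift_quadratic_neg)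
  moreover have "0 < 2 * x * x" using \<open>x \<noteq> 0\<close> by (auto simp: zero_less_mult_iff linorder_neq_iff)
  ultimately have "2 * x * x * ((r + w) * (r + w - s)) < 0" by (simp add: mult_pos_neg)
  with sign[OF r(1) refl] show False by linarith
qed

lemma L_square:
  assumes "L 1 = 0" "w \<in> K"
  shows "L (w * w) = 2 * w * L w"
proof (cases "L w = 0")
  case True
  note e = unit_in_K
  have K: "w + e \<in> K" "w - e \<in> K" "w * w \<in> K" "e * e \<in> K"
    using K_add[OF assms(2) e] K_diff[OF assms(2) e] K_mult[OF assms(2,2)] K_mult[OF e e] by simp_all
  have "L (w + e) = 1" "L (w - e) = - 1"
    using L_add[OF assms(2) e] L_diff[OF assms(2) e] True L_unit by simp_all
  then have "L ((w + e) * (w + e)) = 2 * (w + e)" "L ((w - e) * (w - e)) = - 2 * (w - e)"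
    "L (e * e) = 2 * e"
    using L_square_of_L_nonzero[OF assms(1) K(1)] L_square_of_L_nonzero[OF assms(1) K(2)]
      L_square_of_L_nonzero[OF assms(1) e] L_unit by simp_all
  moreover have "L ((w + e) * (w + e)) + L ((w - e) * (w - e)) = 2 * L (w * w) + 2 * L (e * e)"
  proof -
    have two: "2 \<in> \<rat>" by simp
    have "L ((w + e) * (w + e)) + L ((w - e) * (w - e)) = L ((w + e) * (w + e) + (w - e) * (w - e))"
      using L_add[OF K_mult[OF K(1,1)] K_mult[OF K(2,2)]] by simp
    also have "(w + e) * (w + e) + (w - e) * (w - e) = 2 * (w * w) + 2 * (e * e)" by algebra
    also have "L (2 * (w * w) + 2 * (e * e)) = 2 * L (w * w) + 2 * L (e * e)"
      using L_add[OF K_mult[OF K_Rats[OF two] K(3)] K_mult[OF K_Rats[OF two] K(4)]]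
        L_rat_mult[OF K(3) two] L_rat_mult[OF K(4) two] by simp
    finally show ?thesis .
  qed
  ultimately show ?thesis using True by simp
qed (use L_square_of_L_nonzero assms in blast)

lemma L_mult:
  assumes "L 1 = 0" "v \<in> K" "w \<in> K"
  shows "L (v * w) = v * L w + w * L v"
proof -
  have two: "2 \<in> \<rat>" by simp
  have K: "v * v \<in> K" "w * w \<in> K" "v * w \<in> K" "2 * (v * w) \<in> K" "v + w \<in> K"
    using K_mult[OF assms(2,2)] K_mult[OF assms(3,3)] K_mult[OF assms(2,3)]
      K_mult[OF K_Rats[OF two] K_mult[OF assms(2,3)]] K_add[OF assms(2,3)] by simp_all
  have "(v + w) * (v + w) = v * v + (2 * (v * w) + w * w)" by algebra
  then have "L ((v + w) * (v + w)) = L (v * v) + 2 * L (v * w) + L (w * w)"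
    using L_add[OF K(1) K_add[OF K(4,2)]] L_add[OF K(4,2)] L_rat_mult[OF K(3) two] by simp
  moreover have "L ((v + w) * (v + w)) = 2 * (v + w) * (L v + L w)"
    using L_square[OF assms(1) K(5)] L_add[OF assms(2,3)] by simp
  ultimately have "2 * (v + w) * (L v + L w) = 2 * v * L v + 2 * L (v * w) + 2 * w * L w"
    using L_square[OF assms(1) assms(2)] L_square[OF assms(1) assms(3)] by simp
  then show ?thesis by (simp add: algebra_simps)
qed

end

lemma rat_adjoin_no_positive_split:
  assumes "algebraic a" "positive_split (rat_adjoin a) H1 H2" "1 \<in> H1" "H2 \<noteq> {}"
  shows False
proof -
  interpret positive_split "rat_adjoin a" H1 H2 by fact
  obtain f where f: "rat_minpoly a f" using assms(1) by (rule rat_minpoly_exists)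
  obtain e where "positive e" "\<forall>v\<in>rat_adjoin a. \<exists>N\<in>\<rat>. nonneg (N * e - v)"
    using order_unit_of_finite_span[where b = "\<lambda>i. a ^ i", OF assms(3) rat_adjoin_power
        rat_minpoly.rat_adjoin_span[OF f]] by blast
  then interpret split_order_unit "rat_adjoin a" H1 H2 e by unfold_locales blast+
  have "L 1 = 0" using assms(3,4) by (rule L_one_eq_0)
  have "L e = 0"
    by (rule derivation_rat_adjoin_eq_0[OF assms(1) L_add L_mult[OF \<open>L 1 = 0\<close>] unit_in_K])
  with L_unit show False by simp
qed

theorem theorem1p2:
  fixes a :: real
  assumes "algebraic a"
  shows "\<not> (\<exists>H1 H2. H1 \<noteq> {} \<and> H2 \<noteq> {} \<and> H1 \<inter> H2 = {} \<and>
            H1 \<union> H2 = {x \<in> rat_adjoin a. x > 0} \<and>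
            add_mult_closed H1 \<and> add_mult_closed H2)"
proof
  assume "\<exists>H1 H2. H1 \<noteq> {} \<and> H2 \<noteq> {} \<and> H1 \<inter> H2 = {} \<and>
            H1 \<union> H2 = {x \<in> rat_adjoin a. x > 0} \<and>
            add_mult_closed H1 \<and> add_mult_closed H2"
  then obtain H1 H2 where H: "H1 \<noteq> {}" "H2 \<noteq> {}" "H1 \<inter> H2 = {}"
    "H1 \<union> H2 = {x \<in> rat_adjoin a. x > 0}" "add_mult_closed H1" "add_mult_closed H2"
    by blast
  then have "positive_split (rat_adjoin a) H1 H2" "positive_split (rat_adjoin a) H2 H1"
    by (simp_all add: positive_split_def real_subfield_rat_adjoin Un_commute Int_commute)
  moreover have "1 \<in> H1 \<union> H2"
    using H(4) real_subfield_1[OF real_subfield_rat_adjoin] by simp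
  ultimately show False
    using rat_adjoin_no_positive_split[OF assms] H(1,2) by blast
qed

end
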